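(* Let $n\ge 4$, $d\ge 1$, $\tau>0$, $\sigma>0$. Let $\mu^\star_1,\mu^\star_2\stackrel{\mathrm{i.i.d.}}{\sim}\mathcal N(0,\tau^2 I_d)$ and $\xi_1,\dots,\xi_n\stackrel{\mathrm{i.i.d.}}{\sim}\mathcal N(0,\sigma^2 I_d)$, independent, let $z^\star_1,\dots,z^\star_n\in\{1,2\}$ be fixed labels with both classes $S^\star_\ell=\{i:z^\star_i=\ell\}$ nonempty, and $x_i=\mu^\star_{z^\star_i}+\xi_i$. Let $\mathcal P=\{C_1,C_2\}$ be a fixed partition of $[n]$ into two nonempty sets which is incorrect, i.e. $(C_1,C_2)\ne(S^\star_1,S^\star_2)$ and $(C_1,C_2)\neq(S^\star_2,S^\star_1)$. Then $$\mathbb P(\mathcal P\text{ is a fixed point of Hartigan's algorithm})\le\rho_h^{d/4},\qquad \rho_h=1-\left(\frac{4\tau^2(R^\star)^2n^{-1}}{3\tau^2+\sigma^2}\right)^2<1,$$ where $R^\star=\min(|S^\star_1|,|S^\star_2|)/n$.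
   Context: Centroids $\widehat\mu_k=|C_k|^{-1}\sum_{m\in C_k}x_m$. Hartigan weighted distance: $\Delta_H^2(x_i,C_k)=\frac{|C_k|}{|C_k|-1}\|x_i-\widehat\mu_k\|^2$ if $i\in C_k$, and $\frac{|C_k|}{|C_k|+1}\|x_i-\widehat\mu_k\|^2$ if $i\notin C_k$. A partition is a fixed point of Hartigan's algorithm if no single-sample move is strictly improving: for every $i$ in a cluster $C_k$ with $|C_k|>1$ and the other cluster $C_{k'}$, $\Delta_H^2(x_i,C_k)\le\Delta_H^2(x_i,C_{k'})$. Randomness is over the centers and noise. *)

theory Defs
  imports "HOL-Probability.Probability"
begin

text \<open>Points of R^d are represented as functions nat => real, only coordinates k < d matter.\<close>

definition sqdist :: "nat \<Rightarrow> (nat \<Rightarrow> real) \<Rightarrow> (nat \<Rightarrow> real) \<Rightarrow> real" where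
  "sqdist d u v = (\<Sum>k<d. (u k - v k)^2)"

definition centroid :: "(nat \<Rightarrow> nat \<Rightarrow> real) \<Rightarrow> nat set \<Rightarrow> nat \<Rightarrow> real" where
  "centroid X C = (\<lambda>k. (\<Sum>m\<in>C. X m k) / real (card C))"

definition hartigan_dist :: "nat \<Rightarrow> (nat \<Rightarrow> nat \<Rightarrow> real) \<Rightarrow> nat \<Rightarrow> nat set \<Rightarrow> real" where
  "hartigan_dist d X i C =
     (if i \<in> C then real (card C) / (real (card C) - 1) * sqdist d (X i) (centroid X C)
      else real (card C) / (real (card C) + 1) * sqdist d (X i) (centroid X C))"

definition hartigan_fixed_point :: "nat \<Rightarrow> (nat \<Rightarrow> nat \<Rightarrow> real) \<Rightarrow> nat set \<Rightarrow> nat set \<Rightarrow> bool" where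
  "hartigan_fixed_point d X C1 C2 \<longleftrightarrow>
     (\<forall>i\<in>C1. card C1 > 1 \<longrightarrow> hartigan_dist d X i C1 \<le> hartigan_dist d X i C2) \<and>
     (\<forall>i\<in>C2. card C2 > 1 \<longrightarrow> hartigan_dist d X i C2 \<le> hartigan_dist d X i C1)"

text \<open>Sample space: omega (l-1, k) is coordinate k of center mu*_l (l = 1,2),
  omega (i+1, k) is coordinate k of noise xi_i (i = 1..n).\<close>
definition gmm_measure :: "nat \<Rightarrow> nat \<Rightarrow> real \<Rightarrow> real \<Rightarrow> (nat \<times> nat \<Rightarrow> real) measure" where
  "gmm_measure n d \<tau> \<sigma> =
     (\<Pi>\<^sub>M jk\<in>{..<n+2} \<times> {..<d}.
        (if fst jk < 2 then density lborel (normal_density 0 \<tau>)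
         else density lborel (normal_density 0 \<sigma>)))"

text \<open>Observation x_i = mu*_{z i} + xi_i (samples indexed 1..n, labels z i in {1,2}).\<close>
definition obs :: "(nat \<Rightarrow> nat) \<Rightarrow> (nat \<times> nat \<Rightarrow> real) \<Rightarrow> nat \<Rightarrow> nat \<Rightarrow> real" where
  "obs z \<omega> i k = \<omega> (z i - 1, k) + \<omega> (i + 1, k)"

end

theory Submission
  imports Defs
begin

text \<open>
  Fix a sample \<open>i\<close> of a cluster \<open>C\<close> with \<open>|C| \<ge> 2\<close>, and let \<open>C'\<close> be the other cluster. Both
  \<open>x\<^sub>i - \<mu>(C)\<close> and \<open>x\<^sub>i - \<mu>(C')\<close> are fixed linear combinations of the independent Gaussian centres and
  noises, so each has i.i.d. centred Gaussian coordinates. After the Hartigan weights their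
  variances are \<open>A = \<sigma>\<^sup>2 + 2\<tau>\<^sup>2 q\<^sup>2/(c(c-1))\<close> and \<open>B = \<sigma>\<^sup>2 + 2\<tau>\<^sup>2 q'\<^sup>2/(c'(c'+1))\<close>, where \<open>c, c'\<close> are
  the cluster sizes and \<open>q, q'\<close> count the points of the label opposite to \<open>z i\<close>. A Chernoff bound,
  with the two exponential moments separated by Cauchy-Schwarz, bounds the probability that \<open>i\<close>
  does not want to move by \<open>(4AB/(A+B)\<^sup>2)\<^bsup>d/4\<^esup>\<close>. For an incorrect partition a counting argument
  produces a sample with \<open>(A - B)/(2\<tau>\<^sup>2) \<ge> 4 m\<^sup>2/n\<^sup>3\<close>, \<open>m\<close> the size of the smaller true class,
  and then \<open>4AB/(A+B)\<^sup>2 = 1 - ((A-B)/(A+B))\<^sup>2 \<le> \<rho>\<^sub>h\<close>.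
\<close>

section \<open>Chernoff bounds for Gaussian quadratic forms\<close>

lemma nn_integral_normal_density_exp_square:
  fixes s r :: real
  assumes s: "s > 0" and r: "2 * r * s\<^sup>2 < 1"
  shows "(\<integral>\<^sup>+y. ennreal (normal_density 0 s y) * ennreal (exp (r * y\<^sup>2)) \<partial>lborel)
         = ennreal ((1 - 2 * r * s\<^sup>2) powr (- 1 / 2))"
proof -
  define q where "q = 1 - 2 * r * s\<^sup>2"
  have q: "q > 0" using r by (simp add: q_def)
  \<comment> \<open>the integrand is a rescaled normal density with standard deviation \<open>s / sqrt q\<close>\<close>
  have density: "normal_density 0 s y * exp (r * y\<^sup>2) = q powr (- 1 / 2) * normal_density 0 (s / sqrt q) y"
    for y
  proof -
    have sd: "sqrt (2 * pi * (s / sqrt q)\<^sup>2) = sqrt (2 * pi * s\<^sup>2) / sqrt q"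
      using q s by (simp add: power_divide real_sqrt_divide)
    have exponent: "- (y - 0)\<^sup>2 / (2 * (s / sqrt q)\<^sup>2) = - (y - 0)\<^sup>2 / (2 * s\<^sup>2) + r * y\<^sup>2"
      using q s by (simp add: q_def field_simps)
    have factor: "q powr (- 1 / 2) = 1 / sqrt q"
      using q by (simp add: powr_minus_divide powr_half_sqrt)
    show ?thesis
      using q unfolding normal_density_def sd exponent factor by (simp flip: exp_add)
  qed
  have "(\<integral>\<^sup>+y. ennreal (normal_density 0 s y) * ennreal (exp (r * y\<^sup>2)) \<partial>lborel)
      = (\<integral>\<^sup>+y. ennreal (q powr (- 1 / 2)) * ennreal (normal_density 0 (s / sqrt q) y) \<partial>lborel)"
    by (intro nn_integral_cong) (simp add: density ennreal_mult'[symmetric])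
  also have "\<dots> = ennreal (q powr (- 1 / 2))"
    using q s by (simp add: nn_integral_cmult nn_integral_eq_integral)
  finally show ?thesis by (simp add: q_def)
qed

lemma emeasure_le_square_le_nn_integral_exp:
  fixes f g :: "'a \<Rightarrow> real"
  assumes [measurable]: "f \<in> borel_measurable M" "g \<in> borel_measurable M"
  shows "(emeasure M {x\<in>space M. f x \<le> g x})\<^sup>2
         \<le> (\<integral>\<^sup>+x. ennreal (exp (- f x)) \<partial>M) * (\<integral>\<^sup>+x. ennreal (exp (g x)) \<partial>M)"
proof -
  have "emeasure M {x\<in>space M. f x \<le> g x} = (\<integral>\<^sup>+x. indicator {x\<in>space M. f x \<le> g x} x \<partial>M)"
    by simp
  also have "\<dots> \<le> (\<integral>\<^sup>+x. ennreal (exp (- f x / 2)) * ennreal (exp (g x / 2)) \<partial>M)"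
  proof (intro nn_integral_mono)
    fix x
    have "f x \<le> g x \<Longrightarrow> 1 \<le> exp (- f x / 2) * exp (g x / 2)"
      by (simp flip: exp_add)
    then show "indicator {x\<in>space M. f x \<le> g x} x \<le> ennreal (exp (- f x / 2)) * ennreal (exp (g x / 2))"
      by (auto simp: indicator_def simp flip: ennreal_mult)
  qed
  finally have "(emeasure M {x\<in>space M. f x \<le> g x})\<^sup>2
      \<le> (\<integral>\<^sup>+x. ennreal (exp (- f x / 2)) * ennreal (exp (g x / 2)) \<partial>M)\<^sup>2"
    by (rule power_mono_ennreal)
  also have "\<dots> \<le> (\<integral>\<^sup>+x. ennreal (exp (- f x / 2)) ^ 2 \<partial>M) * (\<integral>\<^sup>+x. ennreal (exp (g x / 2)) ^ 2 \<partial>M)"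
    by (rule Cauchy_Schwarz_nn_integral) measurable
  also have "(\<lambda>x. ennreal (exp (- f x / 2)) ^ 2) = (\<lambda>x. ennreal (exp (- f x)))"
    by (simp add: ennreal_power fun_eq_iff flip: exp_of_nat_mult)
  also have "(\<lambda>x. ennreal (exp (g x / 2)) ^ 2) = (\<lambda>x. ennreal (exp (g x)))"
    by (simp add: ennreal_power fun_eq_iff flip: exp_of_nat_mult)
  finally show ?thesis .
qed

text \<open>The rows \<open>\<omega> (j, -)\<close>, \<open>j \<in> A\<close>, are independent Gaussian vectors \<open>N(0, s\<^sub>j\<^sup>2 I\<^sub>K)\<close>; then
  \<open>lin_comb w \<omega> = \<Sum>\<^sub>j w\<^sub>j \<omega> (j, -)\<close> has i.i.d. \<open>N(0, lin_var w)\<close> coordinates.\<close>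

locale gaussian_array =
  fixes A :: "'a set" and K :: "'b set" and s :: "'a \<Rightarrow> real"
  assumes finite_A: "finite A" and finite_K: "finite K" and s_pos: "\<And>j. s j > 0"
begin

definition M :: "('a \<times> 'b \<Rightarrow> real) measure" where
  "M = (\<Pi>\<^sub>M p\<in>A \<times> K. density lborel (normal_density 0 (s (fst p))))"

definition lin_comb :: "('a \<Rightarrow> real) \<Rightarrow> ('a \<times> 'b \<Rightarrow> real) \<Rightarrow> 'b \<Rightarrow> real" where
  "lin_comb w \<omega> k = (\<Sum>j\<in>A. w j * \<omega> (j, k))"

definition lin_sqnorm :: "('a \<Rightarrow> real) \<Rightarrow> ('a \<times> 'b \<Rightarrow> real) \<Rightarrow> real" where
  "lin_sqnorm w \<omega> = (\<Sum>k\<in>K. (lin_comb w \<omega> k)\<^sup>2)"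

definition lin_var :: "('a \<Rightarrow> real) \<Rightarrow> real" where
  "lin_var w = (\<Sum>j\<in>A. (w j * s j)\<^sup>2)"

lemma prob_space_normal: "prob_space (density lborel (normal_density 0 (s j)))"
  using prob_space_normal_density s_pos by blast

lemma prob_space_M: "prob_space M"
  unfolding M_def by (intro prob_space_PiM prob_space_normal)

lemma sets_M: "sets M = sets (\<Pi>\<^sub>M p\<in>A \<times> K. (borel :: real measure))"
  unfolding M_def by (intro sets_PiM_cong) auto

lemma measurable_component: "p \<in> A \<times> K \<Longrightarrow> (\<lambda>\<omega>. \<omega> p) \<in> borel_measurable M"
  by (simp add: measurable_cong_sets[OF sets_M refl])

lemma distr_component:
  assumes "p \<in> A \<times> K"
  shows "distr M borel (\<lambda>\<omega>. \<omega> p) = density lborel (normal_density 0 (s (fst p)))"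
proof -
  have "distr M borel (\<lambda>\<omega>. \<omega> p) = distr M (density lborel (normal_density 0 (s (fst p)))) (\<lambda>\<omega>. \<omega> p)"
    by (rule distr_cong) auto
  also have "\<dots> = density lborel (normal_density 0 (s (fst p)))"
    unfolding M_def by (rule distr_PiM_component) (use prob_space_normal assms in auto)
  finally show ?thesis .
qed

lemma distributed_component:
  "p \<in> A \<times> K \<Longrightarrow> distributed M lborel (\<lambda>\<omega>. \<omega> p) (\<lambda>x. ennreal (normal_density 0 (s (fst p)) x))"
  unfolding distributed_def
  using measurable_component distr_component by (auto simp: measurable_cong_sets[OF refl sets_lborel] cong: distr_cong)

lemma indep_components: "prob_space.indep_vars M (\<lambda>_. borel) (\<lambda>p \<omega>. \<omega> p) (A \<times> K)"
proof (cases "A \<times> K = {}")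
  case True
  then show ?thesis
    using prob_space_M measurable_component
    by (simp add: prob_space.indep_vars_def prob_space.indep_sets_def) (use True in blast)
next
  case False
  interpret prob_space M by (rule prob_space_M)
  have "distr M (\<Pi>\<^sub>M p\<in>A \<times> K. borel) (\<lambda>\<omega>. \<lambda>p\<in>A \<times> K. \<omega> p) = distr M (\<Pi>\<^sub>M p\<in>A \<times> K. borel) (\<lambda>\<omega>. \<omega>)"
    by (rule distr_cong) (auto simp: M_def space_PiM)
  also have "\<dots> = M"
    by (rule distr_id2) (simp add: sets_M)
  also have "\<dots> = (\<Pi>\<^sub>M p\<in>A \<times> K. distr M borel (\<lambda>\<omega>. \<omega> p))"
    unfolding M_def by (intro PiM_cong) (auto simp flip: M_def simp: distr_component)
  finally show ?thesis
    using indep_vars_iff_distr_eq_PiM'[OF False measurable_component] by simp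
qed


lemma distributed_lin_comb:
  assumes k: "k \<in> K" and var: "lin_var w > 0"
  shows "distributed M lborel (\<lambda>\<omega>. lin_comb w \<omega> k)
           (\<lambda>x. ennreal (normal_density 0 (sqrt (lin_var w)) x))"
proof -
  interpret prob_space M by (rule prob_space_M)
  define J where "J = {j\<in>A. w j \<noteq> 0}"
  have J: "finite J" "J \<subseteq> A" using finite_A by (auto simp: J_def)
  have "J \<noteq> {}"
  proof
    assume "J = {}"
    then have "lin_var w = 0" unfolding lin_var_def by (intro sum.neutral) (auto simp: J_def)
    with var show False by simp
  qed
  have "indep_vars (\<lambda>j. \<Pi>\<^sub>M p\<in>{(j, k)}. borel) (\<lambda>j \<omega>. \<lambda>p\<in>{(j, k)}. \<omega> p) J"
    by (rule indep_vars_restrict[OF indep_components]) (use J k in \<open>auto simp: disjoint_family_on_def\<close>)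
  then have "indep_vars (\<lambda>_. borel) (\<lambda>j \<omega>. (\<lambda>f. w j * f (j, k)) (\<lambda>p\<in>{(j, k)}. \<omega> p)) J"
    by (rule indep_vars_compose2) simp
  then have indep: "indep_vars (\<lambda>_. borel) (\<lambda>j \<omega>. w j * \<omega> (j, k)) J"
    by simp
  have dist: "distributed M lborel (\<lambda>\<omega>. w j * \<omega> (j, k)) (\<lambda>x. ennreal (normal_density 0 (\<bar>w j\<bar> * s j) x))"
    if "j \<in> J" for j
    using normal_density_affine[OF distributed_component[of "(j, k)"], of "w j" 0] that J k s_pos
    by (auto simp: J_def)
  have "distributed M lborel (\<lambda>\<omega>. \<Sum>j\<in>J. w j * \<omega> (j, k))
      (\<lambda>x. ennreal (normal_density (\<Sum>j\<in>J. 0) (sqrt (\<Sum>j\<in>J. (\<bar>w j\<bar> * s j)\<^sup>2)) x))"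
    by (rule sum_indep_normal[OF J(1) \<open>J \<noteq> {}\<close> indep _ dist]) (use s_pos in \<open>auto simp: J_def\<close>)
  moreover have "(\<Sum>j\<in>J. w j * \<omega> (j, k)) = lin_comb w \<omega> k" for \<omega>
    unfolding lin_comb_def by (rule sum.mono_neutral_left) (use finite_A in \<open>auto simp: J_def\<close>)
  moreover have "(\<Sum>j\<in>J. (\<bar>w j\<bar> * s j)\<^sup>2) = lin_var w"
    unfolding lin_var_def power_mult_distrib power2_abs
    by (rule sum.mono_neutral_left) (use finite_A in \<open>auto simp: J_def\<close>)
  ultimately show ?thesis by simp
qed

lemma nn_integral_exp_lin_comb_square:
  assumes k: "k \<in> K" and var: "lin_var w > 0" and r: "2 * r * lin_var w < 1"
  shows "(\<integral>\<^sup>+\<omega>. ennreal (exp (r * (lin_comb w \<omega> k)\<^sup>2)) \<partial>M)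
       = ennreal ((1 - 2 * r * lin_var w) powr (- 1 / 2))"
proof -
  have "(\<integral>\<^sup>+\<omega>. ennreal (exp (r * (lin_comb w \<omega> k)\<^sup>2)) \<partial>M)
     = (\<integral>\<^sup>+x. ennreal (normal_density 0 (sqrt (lin_var w)) x) * ennreal (exp (r * x\<^sup>2)) \<partial>lborel)"
    by (rule distributed_nn_integral[OF distributed_lin_comb[OF k var], symmetric]) simp
  also have "\<dots> = ennreal ((1 - 2 * r * lin_var w) powr (- 1 / 2))"
    using nn_integral_normal_density_exp_square[of "sqrt (lin_var w)" r] var r by simp
  finally show ?thesis .
qed

lemma measurable_lin_comb: "k \<in> K \<Longrightarrow> (\<lambda>\<omega>. lin_comb w \<omega> k) \<in> borel_measurable M"
  unfolding lin_comb_def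
  by (intro borel_measurable_sum borel_measurable_times borel_measurable_const measurable_component) auto

lemma nn_integral_exp_lin_sqnorm:
  assumes var: "lin_var w > 0" and r: "2 * r * lin_var w < 1"
  shows "(\<integral>\<^sup>+\<omega>. ennreal (exp (r * lin_sqnorm w \<omega>)) \<partial>M)
       = ennreal ((1 - 2 * r * lin_var w) powr (- real (card K) / 2))"
proof -
  interpret prob_space M by (rule prob_space_M)
  have "indep_vars (\<lambda>k. \<Pi>\<^sub>M p\<in>A \<times> {k}. borel) (\<lambda>k \<omega>. \<lambda>p\<in>A \<times> {k}. \<omega> p) K"
    by (rule indep_vars_restrict[OF indep_components]) (auto simp: disjoint_family_on_def)
  then have "indep_vars (\<lambda>_. borel)
      (\<lambda>k \<omega>. (\<lambda>f. ennreal (exp (r * (\<Sum>j\<in>A. w j * f (j, k))\<^sup>2))) (\<lambda>p\<in>A \<times> {k}. \<omega> p)) K"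
    by (rule indep_vars_compose2) measurable
  then have indep: "indep_vars (\<lambda>_. borel) (\<lambda>k \<omega>. ennreal (exp (r * (lin_comb w \<omega> k)\<^sup>2))) K"
    unfolding lin_comb_def by (rule indep_vars_cong[THEN iffD1, rotated 3]) (auto intro!: sum.cong)
  have "(\<integral>\<^sup>+\<omega>. ennreal (exp (r * lin_sqnorm w \<omega>)) \<partial>M)
      = (\<integral>\<^sup>+\<omega>. (\<Prod>k\<in>K. ennreal (exp (r * (lin_comb w \<omega> k)\<^sup>2))) \<partial>M)"
    by (simp add: lin_sqnorm_def sum_distrib_left exp_sum finite_K prod_ennreal)
  also have "\<dots> = (\<Prod>k\<in>K. \<integral>\<^sup>+\<omega>. ennreal (exp (r * (lin_comb w \<omega> k)\<^sup>2)) \<partial>M)"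
    by (rule indep_vars_nn_integral[OF finite_K indep]) simp
  also have "\<dots> = (\<Prod>k\<in>K. ennreal ((1 - 2 * r * lin_var w) powr (- 1 / 2)))"
    by (intro prod.cong refl nn_integral_exp_lin_comb_square var r)
  also have "\<dots> = ennreal ((1 - 2 * r * lin_var w) powr (- real (card K) / 2))"
    using r by (simp add: ennreal_power powr_realpow[symmetric] powr_powr)
  finally show ?thesis .
qed

lemma measurable_lin_sqnorm: "lin_sqnorm w \<in> borel_measurable M"
  unfolding lin_sqnorm_def[abs_def]
  by (intro borel_measurable_sum borel_measurable_power measurable_lin_comb)

lemma measure_lin_sqnorm_le_square:
  assumes var: "lin_var a > 0" "lin_var b > 0" and \<alpha>: "\<alpha> \<ge> 0"
    and t: "t > 0" "2 * t * \<beta> * lin_var b < 1"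
  shows "(measure M {\<omega>\<in>space M. \<alpha> * lin_sqnorm a \<omega> \<le> \<beta> * lin_sqnorm b \<omega>})\<^sup>2
         \<le> ((1 + 2 * t * \<alpha> * lin_var a) * (1 - 2 * t * \<beta> * lin_var b)) powr (- real (card K) / 2)"
proof -
  interpret prob_space M by (rule prob_space_M)
  define f where "f \<omega> = t * \<alpha> * lin_sqnorm a \<omega>" for \<omega>
  define g where "g \<omega> = t * \<beta> * lin_sqnorm b \<omega>" for \<omega>
  have "f \<in> borel_measurable M" "g \<in> borel_measurable M"
    unfolding f_def[abs_def] g_def[abs_def] using measurable_lin_sqnorm by simp_all
  then have "(emeasure M {\<omega>\<in>space M. f \<omega> \<le> g \<omega>})\<^sup>2
      \<le> (\<integral>\<^sup>+\<omega>. ennreal (exp (- f \<omega>)) \<partial>M) * (\<integral>\<^sup>+\<omega>. ennreal (exp (g \<omega>)) \<partial>M)"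
    by (rule emeasure_le_square_le_nn_integral_exp)
  also have "(\<integral>\<^sup>+\<omega>. ennreal (exp (- f \<omega>)) \<partial>M)
      = ennreal ((1 + 2 * t * \<alpha> * lin_var a) powr (- real (card K) / 2))"
  proof -
    have "0 \<le> t * (\<alpha> * lin_var a)" using t \<alpha> var by simp
    then show ?thesis
      using nn_integral_exp_lin_sqnorm[OF var(1), of "- (t * \<alpha>)"] by (simp add: f_def mult.assoc)
  qed
  also have "(\<integral>\<^sup>+\<omega>. ennreal (exp (g \<omega>)) \<partial>M)
      = ennreal ((1 - 2 * t * \<beta> * lin_var b) powr (- real (card K) / 2))"
    using nn_integral_exp_lin_sqnorm[OF var(2), of "t * \<beta>"] t by (simp add: g_def mult.assoc)
  also have "ennreal ((1 + 2 * t * \<alpha> * lin_var a) powr (- real (card K) / 2))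
        * ennreal ((1 - 2 * t * \<beta> * lin_var b) powr (- real (card K) / 2))
      = ennreal (((1 + 2 * t * \<alpha> * lin_var a) * (1 - 2 * t * \<beta> * lin_var b)) powr (- real (card K) / 2))"
    using var t \<alpha> by (simp add: powr_mult ennreal_mult'' add_pos_nonneg)
  also have "{\<omega>\<in>space M. f \<omega> \<le> g \<omega>} = {\<omega>\<in>space M. \<alpha> * lin_sqnorm a \<omega> \<le> \<beta> * lin_sqnorm b \<omega>}"
    using t by (auto simp: f_def g_def mult.assoc)
  finally show ?thesis
    by (simp add: emeasure_eq_measure ennreal_power)
qed

lemma measure_lin_sqnorm_le:
  assumes \<alpha>: "\<alpha> > 0" and \<beta>: "\<beta> > 0"
    and pos: "0 < \<beta> * lin_var b" and less: "\<beta> * lin_var b < \<alpha> * lin_var a"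
  defines "\<rho> \<equiv> 4 * (\<alpha> * lin_var a) * (\<beta> * lin_var b) / (\<alpha> * lin_var a + \<beta> * lin_var b)\<^sup>2"
  shows "measure M {\<omega>\<in>space M. \<alpha> * lin_sqnorm a \<omega> \<le> \<beta> * lin_sqnorm b \<omega>}
         \<le> \<rho> powr (real (card K) / 4)"
proof -
  define Ea where "Ea = \<alpha> * lin_var a"
  define Eb where "Eb = \<beta> * lin_var b"
  have Eb: "Eb > 0" and Ea: "Ea > Eb" using pos less by (simp_all add: Ea_def Eb_def)
  have "Ea > 0" using Ea Eb by simp
  then have var: "lin_var a > 0" "lin_var b > 0"
    using Eb \<alpha> \<beta> by (simp_all add: Ea_def Eb_def zero_less_mult_iff)
  \<comment> \<open>the Chernoff exponent minimising the bound of \<open>measure_lin_sqnorm_le_square\<close>\<close>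
  define t where "t = (Ea - Eb) / (4 * Ea * Eb)"
  have t: "t > 0" using Ea Eb by (simp add: t_def)
  have X1: "1 + 2 * t * \<alpha> * lin_var a = (Ea + Eb) / (2 * Eb)"
    and X2: "1 - 2 * t * \<beta> * lin_var b = (Ea + Eb) / (2 * Ea)"
    using Ea Eb unfolding mult.assoc Ea_def[symmetric] Eb_def[symmetric] by (simp_all add: t_def field_simps)
  have "(Ea + Eb) / (2 * Ea) > 0" using Ea Eb by simp
  then have "2 * t * \<beta> * lin_var b < 1" using X2 by linarith
  then have "(measure M {\<omega>\<in>space M. \<alpha> * lin_sqnorm a \<omega> \<le> \<beta> * lin_sqnorm b \<omega>})\<^sup>2
      \<le> ((1 + 2 * t * \<alpha> * lin_var a) * (1 - 2 * t * \<beta> * lin_var b)) powr (- real (card K) / 2)"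
    using var \<alpha> t by (intro measure_lin_sqnorm_le_square) auto
  also have "(1 + 2 * t * \<alpha> * lin_var a) * (1 - 2 * t * \<beta> * lin_var b) = 1 / \<rho>"
    using Ea Eb unfolding X1 X2 by (simp add: \<rho>_def power2_eq_square flip: Ea_def Eb_def)
  also have "(1 / \<rho>) powr (- real (card K) / 2) = (\<rho> powr (real (card K) / 4))\<^sup>2"
  proof -
    have "\<rho> > 0" using Ea Eb by (simp add: \<rho>_def flip: Ea_def Eb_def)
    then show ?thesis by (simp add: powr_minus_divide powr_divide power2_eq_square flip: powr_add)
  qed
  finally show ?thesis by (rule power2_le_imp_le) simp
qed

end

section \<open>The data as a linear image of the Gaussian array\<close>

definition obs_coeff :: "(nat \<Rightarrow> nat) \<Rightarrow> nat \<Rightarrow> nat \<Rightarrow> real" where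
  "obs_coeff z i j = of_bool (j = z i - 1) + of_bool (j = i + 1)"

definition dev_coeff :: "(nat \<Rightarrow> nat) \<Rightarrow> nat \<Rightarrow> nat set \<Rightarrow> nat \<Rightarrow> real" where
  "dev_coeff z i C j = obs_coeff z i j - (\<Sum>m\<in>C. obs_coeff z m j) / real (card C)"

lemma obs_eq_sum_obs_coeff:
  assumes "i \<in> {1..n}" "z i \<in> {1, 2}"
  shows "obs z \<omega> i k = (\<Sum>j<n+2. obs_coeff z i j * \<omega> (j, k))"
  using assms by (auto simp: obs_def obs_coeff_def distrib_right sum.distrib)

lemma obs_minus_centroid_eq_sum_dev_coeff:
  assumes i: "i \<in> {1..n}" and C: "C \<subseteq> {1..n}" and z: "\<forall>m\<in>{1..n}. z m \<in> {1, 2}"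
  shows "obs z \<omega> i k - centroid (obs z \<omega>) C k = (\<Sum>j<n+2. dev_coeff z i C j * \<omega> (j, k))"
proof -
  have obs: "obs z \<omega> m k = (\<Sum>j<n+2. obs_coeff z m j * \<omega> (j, k))" if "m \<in> {1..n}" for m
    using obs_eq_sum_obs_coeff that z by blast
  have "centroid (obs z \<omega>) C k = (\<Sum>m\<in>C. \<Sum>j<n+2. obs_coeff z m j * \<omega> (j, k)) / real (card C)"
    unfolding centroid_def using C by (simp add: obs subset_iff)
  also have "\<dots> = (\<Sum>j<n+2. \<Sum>m\<in>C. obs_coeff z m j * \<omega> (j, k)) / real (card C)"
    by (subst sum.swap) (rule refl)
  also have "\<dots> = (\<Sum>j<n+2. (\<Sum>m\<in>C. obs_coeff z m j) / real (card C) * \<omega> (j, k))"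
    unfolding sum_divide_distrib by (intro sum.cong refl) (simp add: sum_distrib_right)
  finally show ?thesis
    using i by (simp add: obs dev_coeff_def left_diff_distrib sum_subtractf)
qed

lemma dev_coeff_centre:
  assumes i: "i \<in> {1..n}" and C: "C \<subseteq> {1..n}" and z: "\<forall>m\<in>{1..n}. z m \<in> {1, 2}"
    and l: "l \<in> {1, 2}"
  shows "dev_coeff z i C (l - 1) = of_bool (z i = l) - real (card {m\<in>C. z m = l}) / real (card C)"
proof -
  have "obs_coeff z m (l - 1) = of_bool (z m = l)" if "m \<in> {1..n}" for m
    using that z l by (auto simp: obs_coeff_def)
  moreover have "finite C" using C finite_subset by blast
  ultimately show ?thesis
    using i C by (simp add: dev_coeff_def subset_iff Int_def conj_commute)
qed

lemma dev_coeff_noise: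
  assumes i: "i \<in> {1..n}" and C: "C \<subseteq> {1..n}" and z: "\<forall>m\<in>{1..n}. z m \<in> {1, 2}"
    and m0: "1 \<le> m0"
  shows "dev_coeff z i C (m0 + 1) = of_bool (m0 = i) - of_bool (m0 \<in> C) / real (card C)"
proof -
  have "obs_coeff z m (m0 + 1) = of_bool (m0 = m)" if "m \<in> {1..n}" for m
  proof -
    have "z m \<in> {1, 2}" using that z by blast
    then show ?thesis using m0 by (auto simp: obs_coeff_def)
  qed
  moreover have "finite C" using C finite_subset by blast
  ultimately show ?thesis
    using i C by (simp add: dev_coeff_def subset_iff Int_def Collect_conv_if)
qed

lemma sum_square_indicator_minus_mean:
  assumes I: "finite I" "i \<in> I" and C: "C \<subseteq> I" "C \<noteq> {}"
  shows "(\<Sum>m\<in>I. (of_bool (m = i) - of_bool (m \<in> C) / real (card C))\<^sup>2)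
         = (if i \<in> C then 1 - 1 / real (card C) else 1 + 1 / real (card C))"
proof -
  define c where "c = real (card C)"
  have c: "c > 0" using C I finite_subset[OF C(1) I(1)] by (simp add: c_def card_gt_0_iff)
  have "{m\<in>I. m \<in> C} = C" using C by auto
  have "(of_bool (m = i) - of_bool (m \<in> C) / c)\<^sup>2
      = of_bool (m = i) - 2 * of_bool (m = i \<and> i \<in> C) / c + of_bool (m \<in> C) / c\<^sup>2" for m
    using c by (cases "m = i"; cases "m \<in> C") (simp_all add: power2_eq_square field_simps)
  then have "(\<Sum>m\<in>I. (of_bool (m = i) - of_bool (m \<in> C) / c)\<^sup>2)
      = 1 - 2 * of_bool (i \<in> C) / c + c / c\<^sup>2"
    using I C \<open>{m\<in>I. m \<in> C} = C\<close> by (simp add: sum.distrib sum_subtractf Int_def Collect_conv_if Int_absorb1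
        flip: sum_divide_distrib c_def)
  also have "\<dots> = (if i \<in> C then 1 - 1 / c else 1 + 1 / c)"
    using c by (simp add: power2_eq_square)
  finally show ?thesis by (simp add: c_def)
qed

lemma dev_coeff_centre_square:
  assumes i: "i \<in> {1..n}" and C: "C \<subseteq> {1..n}" and z: "\<forall>m\<in>{1..n}. z m \<in> {1, 2}"
    and l: "l \<in> {1, 2}" and "C \<noteq> {}"
  shows "(dev_coeff z i C (l - 1))\<^sup>2 = (real (card {m\<in>C. z m \<noteq> z i}) / real (card C))\<^sup>2"
proof (cases "z i = l")
  case True
  have "finite C" using C finite_subset by blast
  then have "card {m\<in>C. z m = l} + card {m\<in>C. z m \<noteq> l} = card C"
    by (subst card_Un_disjoint[symmetric]) (auto intro: arg_cong[where f = card])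
  then have "real (card {m\<in>C. z m = l}) = real (card C) - real (card {m\<in>C. z m \<noteq> z i})"
    using True by (simp flip: of_nat_add)
  moreover have "card C > 0" using \<open>finite C\<close> \<open>C \<noteq> {}\<close> by (simp add: card_gt_0_iff)
  ultimately show ?thesis
    using dev_coeff_centre[OF i C z l] True by (simp add: diff_divide_distrib)
next
  case False
  have "\<forall>m\<in>insert i C. z m \<in> {1, 2}" using z i C by auto
  then have "{m\<in>C. z m = l} = {m\<in>C. z m \<noteq> z i}"
    using False l by auto
  then show ?thesis
    using dev_coeff_centre[OF i C z l] False by simp
qed

lemma sum_dev_coeff_square:
  fixes \<tau> \<sigma> :: real
  assumes i: "i \<in> {1..n}" and C: "C \<subseteq> {1..n}" "C \<noteq> {}" and z: "\<forall>m\<in>{1..n}. z m \<in> {1, 2}"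
  shows "(\<Sum>j<n+2. (dev_coeff z i C j * (if j < 2 then \<tau> else \<sigma>))\<^sup>2)
       = 2 * \<tau>\<^sup>2 * (real (card {m\<in>C. z m \<noteq> z i}) / real (card C))\<^sup>2
         + \<sigma>\<^sup>2 * (if i \<in> C then 1 - 1 / real (card C) else 1 + 1 / real (card C))"
proof -
  define f where "f j = (dev_coeff z i C j * (if j < 2 then \<tau> else \<sigma>))\<^sup>2" for j
  have split: "(\<Sum>j<n+2. f j) = f 0 + f 1 + (\<Sum>m\<in>{1..n}. f (m + 1))"
    by (simp add: sum.lessThan_Suc_shift sum.atLeast1_atMost_eq del: sum.lessThan_Suc)
  have "f 0 = \<tau>\<^sup>2 * (real (card {m\<in>C. z m \<noteq> z i}) / real (card C))\<^sup>2"
    using dev_coeff_centre_square[OF i C(1) z, of 1] C by (simp add: f_def power_mult_distrib)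
  moreover have "f 1 = \<tau>\<^sup>2 * (real (card {m\<in>C. z m \<noteq> z i}) / real (card C))\<^sup>2"
    using dev_coeff_centre_square[OF i C(1) z, of 2] C by (simp add: f_def power_mult_distrib)
  moreover have "(\<Sum>m\<in>{1..n}. f (m + 1))
      = \<sigma>\<^sup>2 * (\<Sum>m\<in>{1..n}. (of_bool (m = i) - of_bool (m \<in> C) / real (card C))\<^sup>2)"
    unfolding sum_distrib_left
  proof (rule sum.cong[OF refl])
    fix m assume "m \<in> {1..n}"
    then show "f (m + 1) = \<sigma>\<^sup>2 * (of_bool (m = i) - of_bool (m \<in> C) / real (card C))\<^sup>2"
      using dev_coeff_noise[OF i C(1) z, of m] by (simp add: f_def power_mult_distrib)
  qed
  ultimately have "f 0 + f 1 + (\<Sum>m\<in>{1..n}. f (m + 1))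
      = 2 * \<tau>\<^sup>2 * (real (card {m\<in>C. z m \<noteq> z i}) / real (card C))\<^sup>2
        + \<sigma>\<^sup>2 * (if i \<in> C then 1 - 1 / real (card C) else 1 + 1 / real (card C))"
    using sum_square_indicator_minus_mean[of "{1..n}" i C] i C by simp
  then show ?thesis
    unfolding split[unfolded f_def] by (simp only: f_def)
qed

lemma hartigan_dist_obs_eq:
  assumes i: "i \<in> {1..n}" and C: "C \<subseteq> {1..n}" and z: "\<forall>m\<in>{1..n}. z m \<in> {1, 2}"
  shows "hartigan_dist d (obs z \<omega>) i C
       = (if i \<in> C then real (card C) / (real (card C) - 1) else real (card C) / (real (card C) + 1))
         * (\<Sum>k<d. (\<Sum>j<n+2. dev_coeff z i C j * \<omega> (j, k))\<^sup>2)"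
  by (simp add: hartigan_dist_def sqdist_def obs_minus_centroid_eq_sum_dev_coeff[OF i C z])

lemma hartigan_var_mem:
  fixes \<tau> \<sigma> :: real
  assumes i: "i \<in> C" and C: "C \<subseteq> {1..n}" "2 \<le> card C" and z: "\<forall>m\<in>{1..n}. z m \<in> {1, 2}"
  defines "c \<equiv> real (card C)" and "q \<equiv> real (card {m\<in>C. z m \<noteq> z i})"
  shows "c / (c - 1) * (\<Sum>j<n+2. (dev_coeff z i C j * (if j < 2 then \<tau> else \<sigma>))\<^sup>2)
       = \<sigma>\<^sup>2 + 2 * \<tau>\<^sup>2 * (q\<^sup>2 / (c * (c - 1)))"
proof -
  have "c \<noteq> 0" "c - 1 \<noteq> 0" using C by (auto simp: c_def)
  moreover have "i \<in> {1..n}" "C \<noteq> {}" using i C by auto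
  ultimately show ?thesis
    unfolding sum_dev_coeff_square[OF \<open>i \<in> {1..n}\<close> C(1) \<open>C \<noteq> {}\<close> z]
    using i by (simp add: c_def[symmetric] q_def[symmetric] divide_simps power2_eq_square)
qed

lemma hartigan_var_not_mem:
  fixes \<tau> \<sigma> :: real
  assumes i: "i \<in> {1..n}" "i \<notin> C" and C: "C \<subseteq> {1..n}" "C \<noteq> {}" and z: "\<forall>m\<in>{1..n}. z m \<in> {1, 2}"
  defines "c \<equiv> real (card C)" and "q \<equiv> real (card {m\<in>C. z m \<noteq> z i})"
  shows "c / (c + 1) * (\<Sum>j<n+2. (dev_coeff z i C j * (if j < 2 then \<tau> else \<sigma>))\<^sup>2)
       = \<sigma>\<^sup>2 + 2 * \<tau>\<^sup>2 * (q\<^sup>2 / (c * (c + 1)))"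
proof -
  have "c \<noteq> 0" "c + 1 \<noteq> 0" using C finite_subset[OF C(1)] by (auto simp: c_def)
  then show ?thesis
    unfolding sum_dev_coeff_square[OF i(1) C z]
    using i by (simp add: c_def[symmetric] q_def[symmetric] divide_simps power2_eq_square)
qed

section \<open>Probability that a single move does not improve\<close>

lemma card_mismatch_square_le:
  assumes "finite C" "i \<in> C" "2 \<le> card C"
  shows "(real (card {m\<in>C. z m \<noteq> z i}))\<^sup>2 \<le> real (card C) * (real (card C) - 1)"
proof -
  have "card {m\<in>C. z m \<noteq> z i} \<le> card (C - {i})"
    using assms by (intro card_mono) auto
  then have "real (card {m\<in>C. z m \<noteq> z i}) \<le> real (card C) - 1"
    using assms by simp
  then have "(real (card {m\<in>C. z m \<noteq> z i}))\<^sup>2 \<le> (real (card C) - 1)\<^sup>2"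
    by (intro power_mono) simp_all
  also have "\<dots> \<le> real (card C) * (real (card C) - 1)"
    using assms by (simp add: power2_eq_square)
  finally show ?thesis .
qed

lemma four_mult_div_sum_square_le:
  fixes x y \<delta> G :: real
  assumes "0 < y" "y + 2 * \<delta> \<le> x" "x \<le> G" "0 \<le> \<delta>"
  shows "4 * x * y / (x + y)\<^sup>2 \<le> 1 - (\<delta> / G)\<^sup>2"
proof -
  have "(x + y)\<^sup>2 \<noteq> 0" using assms by simp
  have "4 * x * y / (x + y)\<^sup>2 = ((x + y)\<^sup>2 - (x - y)\<^sup>2) / (x + y)\<^sup>2"
    by (simp add: power2_eq_square algebra_simps)
  also have "\<dots> = 1 - ((x - y) / (x + y))\<^sup>2"
    using \<open>(x + y)\<^sup>2 \<noteq> 0\<close> by (simp add: diff_divide_distrib[of "(x + y)\<^sup>2"] power_divide)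
  finally have "4 * x * y / (x + y)\<^sup>2 = 1 - ((x - y) / (x + y))\<^sup>2" .
  moreover have "\<delta> / G \<le> (x - y) / (x + y)"
  proof -
    have "\<delta> / G = (2 * \<delta>) / (2 * G)" by simp
    also have "\<dots> \<le> (x - y) / (2 * G)"
      using assms by (intro divide_right_mono) auto
    also have "\<dots> \<le> (x - y) / (x + y)"
      using assms by (intro divide_left_mono) auto
    finally show ?thesis .
  qed
  moreover have "0 \<le> \<delta> / G" using assms by simp
  ultimately show ?thesis
    by (simp add: power_mono)
qed

lemma measure_no_improving_move_le_chernoff:
  fixes n d :: nat and \<tau> \<sigma> :: real
  assumes \<tau>: "\<tau> > 0" and \<sigma>: "\<sigma> > 0" and z: "\<forall>m\<in>{1..n}. z m \<in> {1, 2}"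
    and C: "C \<subseteq> {1..n}" "i \<in> C" "2 \<le> card C"
    and C': "C' \<subseteq> {1..n}" "C' \<noteq> {}" "i \<notin> C'"
    and H: "H \<subseteq> {\<omega> \<in> space (gmm_measure n d \<tau> \<sigma>). hartigan_dist d (obs z \<omega>) i C \<le> hartigan_dist d (obs z \<omega>) i C'}"
  defines "Ea \<equiv> \<sigma>\<^sup>2 + 2 * \<tau>\<^sup>2 * ((real (card {m\<in>C. z m \<noteq> z i}))\<^sup>2 / (real (card C) * (real (card C) - 1)))"
    and "Eb \<equiv> \<sigma>\<^sup>2 + 2 * \<tau>\<^sup>2 * ((real (card {m\<in>C'. z m \<noteq> z i}))\<^sup>2 / (real (card C') * (real (card C') + 1)))"
  assumes less: "Eb < Ea"
  shows "measure (gmm_measure n d \<tau> \<sigma>) H \<le> (4 * Ea * Eb / (Ea + Eb)\<^sup>2) powr (real d / 4)"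
proof -
  define sd where "sd j = (if j < 2 then \<tau> else \<sigma>)" for j :: nat
  interpret gaussian_array "{..<n+2}" "{..<d}" sd
    by unfold_locales (use \<tau> \<sigma> in \<open>auto simp: sd_def\<close>)
  interpret prob_space M by (rule prob_space_M)
  have gmm: "gmm_measure n d \<tau> \<sigma> = M"
    unfolding gmm_measure_def M_def by (intro PiM_cong) (auto simp: sd_def)
  have i: "i \<in> {1..n}" using C by auto
  define \<alpha> where "\<alpha> = real (card C) / (real (card C) - 1)"
  define \<beta> where "\<beta> = real (card C') / (real (card C') + 1)"
  have "card C' > 0" using C' finite_subset[OF C'(1)] by (simp add: card_gt_0_iff)
  then have \<alpha>: "\<alpha> > 0" and \<beta>: "\<beta> > 0" using C by (simp_all add: \<alpha>_def \<beta>_def)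
  have Ea: "Ea = \<alpha> * lin_var (dev_coeff z i C)"
    unfolding lin_var_def sd_def \<alpha>_def Ea_def using hartigan_var_mem[OF C(2,1,3) z] by simp
  have Eb: "Eb = \<beta> * lin_var (dev_coeff z i C')"
    unfolding lin_var_def sd_def \<beta>_def Eb_def using hartigan_var_not_mem[OF i C'(3,1,2) z] by simp
  have "Eb > 0" unfolding Eb_def using \<sigma> by (intro add_pos_nonneg) auto
  have sqnorm: "lin_sqnorm w \<omega> = (\<Sum>k<d. (\<Sum>j<n+2. w j * \<omega> (j, k))\<^sup>2)" for w \<omega>
    unfolding lin_sqnorm_def lin_comb_def ..
  have "H \<subseteq> {\<omega> \<in> space M. \<alpha> * lin_sqnorm (dev_coeff z i C) \<omega> \<le> \<beta> * lin_sqnorm (dev_coeff z i C') \<omega>}"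
    using H C C' unfolding gmm hartigan_dist_obs_eq[OF i C(1) z] hartigan_dist_obs_eq[OF i C'(1) z]
      sqnorm[symmetric] by (simp add: \<alpha>_def \<beta>_def)
  then have "measure M H
      \<le> measure M {\<omega> \<in> space M. \<alpha> * lin_sqnorm (dev_coeff z i C) \<omega> \<le> \<beta> * lin_sqnorm (dev_coeff z i C') \<omega>}"
    by (intro finite_measure_mono borel_measurable_le borel_measurable_times
        borel_measurable_const measurable_lin_sqnorm)
  also have "\<dots> \<le> (4 * Ea * Eb / (Ea + Eb)\<^sup>2) powr (real d / 4)"
    using measure_lin_sqnorm_le[OF \<alpha> \<beta>, of "dev_coeff z i C'" "dev_coeff z i C", folded Ea Eb]
      \<open>Eb > 0\<close> less by simp
  finally show ?thesis unfolding gmm .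
qed

text \<open>For \<open>i \<in> C\<close> and \<open>i \<notin> C'\<close>, \<open>2\<tau>\<^sup>2 hartigan_gap |C| q |C'| q'\<close> is the difference \<open>A - B\<close> of the
  per-coordinate variances of the two Hartigan distances (see \<open>hartigan_var_mem\<close>).\<close>

definition hartigan_gap :: "real \<Rightarrow> real \<Rightarrow> real \<Rightarrow> real \<Rightarrow> real" where
  "hartigan_gap c q c' q' = q\<^sup>2 / (c * (c - 1)) - q'\<^sup>2 / (c' * (c' + 1))"

lemma measure_no_improving_move_le:
  fixes n d :: nat and \<tau> \<sigma> r G :: real
  assumes \<tau>: "\<tau> > 0" and \<sigma>: "\<sigma> > 0" and G: "\<sigma>\<^sup>2 + 2 * \<tau>\<^sup>2 \<le> G" and z: "\<forall>m\<in>{1..n}. z m \<in> {1, 2}"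
    and C: "C \<subseteq> {1..n}" "i \<in> C" "2 \<le> card C"
    and C': "C' \<subseteq> {1..n}" "C' \<noteq> {}" "i \<notin> C'"
    and r: "0 < r" "r \<le> hartigan_gap (card C) (card {m\<in>C. z m \<noteq> z i}) (card C') (card {m\<in>C'. z m \<noteq> z i})"
    and H: "H \<subseteq> {\<omega> \<in> space (gmm_measure n d \<tau> \<sigma>). hartigan_dist d (obs z \<omega>) i C \<le> hartigan_dist d (obs z \<omega>) i C'}"
  shows "measure (gmm_measure n d \<tau> \<sigma>) H \<le> (1 - (\<tau>\<^sup>2 * r / G)\<^sup>2) powr (real d / 4)"
proof -
  define c where "c = real (card C)"
  define c' where "c' = real (card C')"
  define q where "q = real (card {m\<in>C. z m \<noteq> z i})"
  define q' where "q' = real (card {m\<in>C'. z m \<noteq> z i})"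
  define Ea where "Ea = \<sigma>\<^sup>2 + 2 * \<tau>\<^sup>2 * (q\<^sup>2 / (c * (c - 1)))"
  define Eb where "Eb = \<sigma>\<^sup>2 + 2 * \<tau>\<^sup>2 * (q'\<^sup>2 / (c' * (c' + 1)))"
  have "Eb > 0" unfolding Eb_def using \<sigma> by (intro add_pos_nonneg) (auto simp: c'_def q'_def)
  have "\<tau>\<^sup>2 * r \<le> \<tau>\<^sup>2 * hartigan_gap c q c' q'"
    using r by (intro mult_left_mono) (simp_all add: c_def c'_def q_def q'_def)
  then have gap: "Eb + 2 * (\<tau>\<^sup>2 * r) \<le> Ea"
    by (simp add: Ea_def Eb_def hartigan_gap_def algebra_simps)
  have "q\<^sup>2 / (c * (c - 1)) \<le> 1"
    using card_mismatch_square_le[OF finite_subset[OF C(1)] C(2,3)] C(3)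
    by (simp add: q_def c_def)
  then have "Ea \<le> G"
    using G mult_left_le[of "q\<^sup>2 / (c * (c - 1))" "2 * \<tau>\<^sup>2"] by (simp add: Ea_def)
  have "0 < \<tau>\<^sup>2 * r" using r \<tau> by simp
  with gap have "Eb < Ea" by linarith
  have "measure (gmm_measure n d \<tau> \<sigma>) H \<le> (4 * Ea * Eb / (Ea + Eb)\<^sup>2) powr (real d / 4)"
    using measure_no_improving_move_le_chernoff[OF \<tau> \<sigma> z C C' H] \<open>Eb < Ea\<close>
    by (simp add: Ea_def Eb_def c_def c'_def q_def q'_def)
  also have "\<dots> \<le> (1 - (\<tau>\<^sup>2 * r / G)\<^sup>2) powr (real d / 4)"
    using \<open>Eb > 0\<close> \<open>Eb < Ea\<close> gap \<open>Ea \<le> G\<close> r \<tau>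
    by (intro powr_mono2 four_mult_div_sum_square_le divide_nonneg_nonneg mult_nonneg_nonneg) auto
  finally show ?thesis .
qed

section \<open>Incorrect partitions admit a move with a large gap\<close>

lemma hartigan_gap_ge_if_other_pure:
  fixes c q m N :: real
  assumes "2 \<le> c" "4 \<le> N" "c \<le> N" "0 \<le> m" "m \<le> q"
  shows "4 * m\<^sup>2 / N ^ 3 \<le> hartigan_gap c q c' 0"
proof -
  have "4 * m\<^sup>2 / N ^ 3 \<le> 4 * q\<^sup>2 / N ^ 3"
    using assms by (simp add: divide_right_mono power_mono)
  also have "\<dots> = (4 / N) * (q\<^sup>2 / N\<^sup>2)"
    by (simp add: power2_eq_square power3_eq_cube)
  also have "\<dots> \<le> q\<^sup>2 / N\<^sup>2"
    using assms by (intro mult_left_le_one_le) auto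
  also have "\<dots> \<le> q\<^sup>2 / (c * (c - 1))"
    using assms by (intro frac_le) (auto simp: power2_eq_square intro: mult_mono)
  finally show ?thesis by (simp add: hartigan_gap_def)
qed

lemma inverse_le_sum_squares_gap:
  fixes x y :: real
  assumes "0 \<le> x" "0 \<le> y" "2 \<le> x + y"
  defines "e \<equiv> x + y"
  shows "1 / e \<le> (x\<^sup>2 + y\<^sup>2) / (e * (e - 1)) - (x\<^sup>2 + y\<^sup>2) / (e * (e + 1))"
proof -
  have e: "e \<ge> 2" using assms by simp
  then have nz: "e * (e - 1) \<noteq> 0" "e * (e + 1) \<noteq> 0" "e * (e - 1) * (e + 1) \<noteq> 0" by auto
  have pos: "e * (e - 1) * (e + 1) > 0" using e by simp
  have "1 / e = e\<^sup>2 / (e * e * e)" using e by (simp add: power2_eq_square)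
  also have "\<dots> \<le> e\<^sup>2 / (e * (e - 1) * (e + 1))"
    using e pos by (intro divide_left_mono) (simp_all add: algebra_simps)
  also have "\<dots> \<le> 2 * (x\<^sup>2 + y\<^sup>2) / (e * (e - 1) * (e + 1))"
  proof -
    have "e\<^sup>2 \<le> 2 * (x\<^sup>2 + y\<^sup>2)"
      using sum_squares_ge_zero[of "x - y" 0] by (simp add: e_def power2_eq_square algebra_simps)
    then show ?thesis using pos by (intro divide_right_mono) auto
  qed
  also have "\<dots> = (x\<^sup>2 + y\<^sup>2) / (e * (e - 1)) - (x\<^sup>2 + y\<^sup>2) / (e * (e + 1))"
    using nz by (simp add: field_simps)
  finally show ?thesis .
qed

lemma sum_hartigan_gaps_ge:
  fixes a b a' b' :: real
  assumes "0 \<le> a" "0 \<le> b" "0 \<le> a'" "0 \<le> b'" "2 \<le> a + b" "2 \<le> a' + b'"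
  defines "c \<equiv> a + b" and "c' \<equiv> a' + b'"
  shows "4 / (c + c') \<le> hartigan_gap c b c' b' + hartigan_gap c a c' a'
                        + hartigan_gap c' b' c b + hartigan_gap c' a' c a"
proof -
  have harmonic: "4 / (u + v) \<le> 1 / u + 1 / v" if "u > 0" "v > 0" for u v :: real
  proof -
    have "4 * u * v \<le> (u + v)\<^sup>2"
      using sum_squares_ge_zero[of "u - v" 0] by (simp add: power2_eq_square algebra_simps)
    then show ?thesis using that by (simp add: field_simps power2_eq_square)
  qed
  have "4 / (c + c') \<le> 1 / c + 1 / c'"
    by (rule harmonic) (use assms in simp_all)
  also have "\<dots> \<le> hartigan_gap c b c' b' + hartigan_gap c a c' a'
                    + hartigan_gap c' b' c b + hartigan_gap c' a' c a"
    using inverse_le_sum_squares_gap[of a b] inverse_le_sum_squares_gap[of a' b'] assms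
    by (simp add: hartigan_gap_def add_divide_distrib)
  finally show ?thesis .
qed

lemma exists_large_hartigan_gap_mixed:
  fixes a b a' b' m :: real
  assumes "0 \<le> a" "0 \<le> b" "0 \<le> a'" "0 \<le> b'" "2 \<le> a + b" "2 \<le> a' + b'"
    and "0 \<le> m" "m \<le> a + a'" "m \<le> b + b'"
  defines "c \<equiv> a + b" and "c' \<equiv> a' + b'" and "r \<equiv> 4 * m\<^sup>2 / (a + b + a' + b') ^ 3"
  shows "r \<le> hartigan_gap c b c' b' \<or> r \<le> hartigan_gap c a c' a'
       \<or> r \<le> hartigan_gap c' b' c b \<or> r \<le> hartigan_gap c' a' c a"
proof -
  have N: "c + c' \<ge> 4" using assms by (simp add: c_def c'_def)
  have "(2 * m)\<^sup>2 \<le> (c + c')\<^sup>2"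
    using assms by (intro power_mono) (auto simp: c_def c'_def)
  then have "r \<le> (c + c')\<^sup>2 / (c + c') ^ 3"
    using N by (simp add: r_def c_def c'_def add.assoc divide_right_mono)
  also have "\<dots> = 1 / (c + c')"
    using N by (simp add: power2_eq_square power3_eq_cube)
  finally have "4 * r \<le> 4 / (c + c')" by simp
  with sum_hartigan_gaps_ge[OF assms(1-6)] show ?thesis
    unfolding c_def c'_def by linarith
qed

text \<open>\<open>a1, b1\<close> (\<open>a2, b2\<close>) count the samples of label 1, 2 in the first (second) cluster; the four
  disjuncts are the four kinds of single-sample moves.\<close>

lemma exists_large_hartigan_gap:
  fixes a1 b1 a2 b2 :: nat
  assumes "1 \<le> a1 + b1" "1 \<le> a2 + b2" "1 \<le> a1 + a2" "1 \<le> b1 + b2"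
    and "\<not> (b1 = 0 \<and> a2 = 0)" "\<not> (a1 = 0 \<and> b2 = 0)" "4 \<le> a1 + b1 + a2 + b2"
  defines "c \<equiv> real (a1 + b1)" and "c' \<equiv> real (a2 + b2)"
    and "r \<equiv> 4 * (real (min (a1 + a2) (b1 + b2)))\<^sup>2 / real (a1 + b1 + a2 + b2) ^ 3"
  shows "(1 \<le> a1 \<and> 2 \<le> a1 + b1 \<and> r \<le> hartigan_gap c (real b1) c' (real b2))
       \<or> (1 \<le> b1 \<and> 2 \<le> a1 + b1 \<and> r \<le> hartigan_gap c (real a1) c' (real a2))
       \<or> (1 \<le> a2 \<and> 2 \<le> a2 + b2 \<and> r \<le> hartigan_gap c' (real b2) c (real b1))
       \<or> (1 \<le> b2 \<and> 2 \<le> a2 + b2 \<and> r \<le> hartigan_gap c' (real a2) c (real a1))"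
proof -
  define m where "m = real (min (a1 + a2) (b1 + b2))"
  have m: "0 \<le> m" "m \<le> real a1 + real a2" "m \<le> real b1 + real b2"
    by (auto simp: m_def)
  have r: "r = 4 * m\<^sup>2 / (c + c') ^ 3" by (simp add: r_def m_def c_def c'_def add.assoc)
  \<comment> \<open>the target cluster contains no point of the label opposite to the moving one\<close>
  have pure: "r \<le> hartigan_gap x q y 0" if "x + y = c + c'" "2 \<le> x" "0 \<le> y" "m \<le> q" for x y q
    unfolding r using that m assms(7)
    by (intro hartigan_gap_ge_if_other_pure) (auto simp: c_def c'_def)
  consider "b2 = 0" | "a2 = 0" | "a1 = 0" | "b1 = 0" | "1 \<le> a1" "1 \<le> b1" "1 \<le> a2" "1 \<le> b2"
    by linarith
  then show ?thesis
  proof cases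
    case 1
    then have "1 \<le> a1" "1 \<le> b1" using assms by auto
    then show ?thesis using 1 m pure[of c c' b1] by (simp add: c_def c'_def)
  next
    case 2
    then have "1 \<le> a1" "1 \<le> b1" using assms by auto
    then show ?thesis using 2 m pure[of c c' a1] by (simp add: c_def c'_def)
  next
    case 3
    then have "1 \<le> a2" "1 \<le> b2" using assms by auto
    then show ?thesis using 3 m pure[of c' c a2] by (simp add: c_def c'_def)
  next
    case 4
    then have "1 \<le> a2" "1 \<le> b2" using assms by auto
    then show ?thesis using 4 m pure[of c' c b2] by (simp add: c_def c'_def)
  next
    case 5
    then show ?thesis
      using exists_large_hartigan_gap_mixed[of "real a1" "real b1" "real a2" "real b2" m] m
      by (auto simp: r c_def c'_def add.assoc)
  qed
qed

lemma card_label_split: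
  assumes "finite C" "\<forall>m\<in>C. z m \<in> {1, 2::nat}"
  shows "card {m\<in>C. z m = 1} + card {m\<in>C. z m = 2} = card C"
proof -
  have "card C = card ({m\<in>C. z m = 1} \<union> {m\<in>C. z m = 2})"
    using assms(2) by (intro arg_cong[where f = card]) auto
  also have "\<dots> = card {m\<in>C. z m = 1} + card {m\<in>C. z m = 2}"
    using assms(1) by (intro card_Un_disjoint) auto
  finally show ?thesis ..
qed

lemma card_filter_Un_disjoint:
  assumes "finite A" "finite B" "A \<inter> B = {}"
  shows "card {m\<in>A \<union> B. P m} = card {m\<in>A. P m} + card {m\<in>B. P m}"
proof -
  have "{m\<in>A \<union> B. P m} = {m\<in>A. P m} \<union> {m\<in>B. P m}" by auto
  then show ?thesis using assms by (simp add: card_Un_disjoint disjoint_iff)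
qed

lemma hartigan_gap_witness:
  fixes z :: "'a \<Rightarrow> nat"
  assumes z: "\<forall>m\<in>C \<union> C'. z m \<in> {1, 2}" and l: "l \<in> {1, 2}" and "1 \<le> card {m\<in>C. z m = l}"
    and r: "r \<le> hartigan_gap (card C) (card {m\<in>C. z m = 3 - l}) (card C') (card {m\<in>C'. z m = 3 - l})"
  shows "\<exists>i\<in>C. r \<le> hartigan_gap (card C) (card {m\<in>C. z m \<noteq> z i}) (card C') (card {m\<in>C'. z m \<noteq> z i})"
proof -
  obtain i where i: "i \<in> C" "z i = l"
    using \<open>1 \<le> card {m\<in>C. z m = l}\<close> by (metis (mono_tags, lifting) Collect_empty_eq card.empty not_one_le_zero)
  have mismatch: "{m\<in>X. z m \<noteq> z i} = {m\<in>X. z m = 3 - l}" if "X \<subseteq> C \<union> C'" for X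
  proof -
    have "\<forall>m\<in>X. z m \<in> {1, 2}" using that z by blast
    with l show ?thesis by (auto simp: i(2))
  qed
  show ?thesis
  proof (rule bexI[OF _ i(1)])
    show "r \<le> hartigan_gap (card C) (card {m\<in>C. z m \<noteq> z i}) (card C') (card {m\<in>C'. z m \<noteq> z i})"
      unfolding mismatch[OF Un_upper1] mismatch[OF Un_upper2] by (rule r)
  qed
qed

lemma partition_eq_label_classes:
  fixes z :: "nat \<Rightarrow> nat"
  assumes part: "C1 \<union> C2 = {1..n}" and z: "\<forall>i\<in>{1..n}. z i \<in> {1, 2}" and l: "l \<in> {1, 2}"
    and pure: "card {m\<in>C1. z m = 3 - l} = 0" "card {m\<in>C2. z m = l} = 0"
  shows "C1 = {i\<in>{1..n}. z i = l} \<and> C2 = {i\<in>{1..n}. z i = 3 - l}"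
proof -
  have "finite C1" "finite C2" using part finite_subset[of _ "{1..n}"] by blast+
  then have "\<forall>m\<in>C1. z m \<noteq> 3 - l" "\<forall>m\<in>C2. z m \<noteq> l" using pure by auto
  moreover have "{1, 2} = {l, 3 - l}" using l by auto
  ultimately show ?thesis using part z by blast
qed

lemma incorrect_partition_has_large_hartigan_gap:
  fixes n :: nat and z :: "nat \<Rightarrow> nat" and C1 C2 :: "nat set"
  defines "S1 \<equiv> {i\<in>{1..n}. z i = 1}" and "S2 \<equiv> {i\<in>{1..n}. z i = 2}"
  assumes n: "4 \<le> n" and z: "\<forall>i\<in>{1..n}. z i \<in> {1, 2}" and S: "S1 \<noteq> {}" "S2 \<noteq> {}"
    and part: "C1 \<union> C2 = {1..n}" "C1 \<inter> C2 = {}" "C1 \<noteq> {}" "C2 \<noteq> {}"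
    and wrong: "\<not> (C1 = S1 \<and> C2 = S2)" "\<not> (C1 = S2 \<and> C2 = S1)"
  defines "r \<equiv> 4 * (real (min (card S1) (card S2)))\<^sup>2 / real n ^ 3"
  shows "(\<exists>i\<in>C1. 2 \<le> card C1 \<and>
            r \<le> hartigan_gap (card C1) (card {m\<in>C1. z m \<noteq> z i}) (card C2) (card {m\<in>C2. z m \<noteq> z i}))
       \<or> (\<exists>i\<in>C2. 2 \<le> card C2 \<and>
            r \<le> hartigan_gap (card C2) (card {m\<in>C2. z m \<noteq> z i}) (card C1) (card {m\<in>C1. z m \<noteq> z i}))"
proof -
  have fin: "finite C1" "finite C2"
    using part(1) finite_subset[of _ "{1..n}"] by blast+
  have zC: "\<forall>m\<in>C1 \<union> C2. z m \<in> {1, 2}" using z part(1) by blast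
  define a1 where "a1 = card {m\<in>C1. z m = 1}"
  define b1 where "b1 = card {m\<in>C1. z m = 2}"
  define a2 where "a2 = card {m\<in>C2. z m = 1}"
  define b2 where "b2 = card {m\<in>C2. z m = 2}"
  have C1: "a1 + b1 = card C1"
    unfolding a1_def b1_def by (rule card_label_split) (use fin zC in auto)
  have C2: "a2 + b2 = card C2"
    unfolding a2_def b2_def by (rule card_label_split) (use fin zC in auto)
  have S1: "a1 + a2 = card S1" and S2: "b1 + b2 = card S2"
    unfolding S1_def S2_def a1_def a2_def b1_def b2_def part(1)[symmetric]
    by (rule card_filter_Un_disjoint[OF fin part(2), symmetric])+
  have total: "a1 + b1 + a2 + b2 = n"
    using card_Un_disjoint[OF fin part(2)] part(1) C1 C2 by simp
  have min: "min (a1 + a2) (b1 + b2) = min (card S1) (card S2)" using S1 S2 by simp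
  have "1 \<le> a1 + b1" "1 \<le> a2 + b2"
    using C1 C2 part fin by (simp_all add: Suc_le_eq card_gt_0_iff)
  moreover have "1 \<le> a1 + a2" "1 \<le> b1 + b2"
    using S S1 S2 by (simp_all add: Suc_le_eq card_gt_0_iff S1_def S2_def)
  moreover have "\<not> (b1 = 0 \<and> a2 = 0)"
    using partition_eq_label_classes[OF part(1) z, of 1] wrong(1) by (auto simp: b1_def a2_def S1_def S2_def)
  moreover have "\<not> (a1 = 0 \<and> b2 = 0)"
    using partition_eq_label_classes[OF part(1) z, of 2] wrong(2) by (auto simp: a1_def b2_def S1_def S2_def)
  moreover note n
  ultimately have gaps: "(1 \<le> a1 \<and> 2 \<le> a1 + b1 \<and> r \<le> hartigan_gap (a1 + b1) b1 (a2 + b2) b2)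
       \<or> (1 \<le> b1 \<and> 2 \<le> a1 + b1 \<and> r \<le> hartigan_gap (a1 + b1) a1 (a2 + b2) a2)
       \<or> (1 \<le> a2 \<and> 2 \<le> a2 + b2 \<and> r \<le> hartigan_gap (a2 + b2) b2 (a1 + b1) b1)
       \<or> (1 \<le> b2 \<and> 2 \<le> a2 + b2 \<and> r \<le> hartigan_gap (a2 + b2) a2 (a1 + b1) a1)"
    by (rule exists_large_hartigan_gap[of a1 b1 a2 b2, unfolded total min, folded r_def])
  then show ?thesis
    unfolding C1 C2
  proof (elim disjE conjE)
    assume "1 \<le> a1" "2 \<le> card C1" "r \<le> hartigan_gap (card C1) b1 (card C2) b2"
    then show ?thesis using hartigan_gap_witness[OF zC, of 1 r] by (auto simp: a1_def b1_def b2_def)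
  next
    assume "1 \<le> b1" "2 \<le> card C1" "r \<le> hartigan_gap (card C1) a1 (card C2) a2"
    then show ?thesis using hartigan_gap_witness[OF zC, of 2 r] by (auto simp: b1_def a1_def a2_def)
  next
    assume "1 \<le> a2" "2 \<le> card C2" "r \<le> hartigan_gap (card C2) b2 (card C1) b1"
    then show ?thesis using hartigan_gap_witness[of C2 C1 z 1 r] zC by (auto simp: a2_def b2_def b1_def)
  next
    assume "1 \<le> b2" "2 \<le> card C2" "r \<le> hartigan_gap (card C2) a2 (card C1) a1"
    then show ?thesis using hartigan_gap_witness[of C2 C1 z 2 r] zC by (auto simp: b2_def a2_def a1_def)
  qed
qed

theorem corollary3p11:
  fixes n d :: nat and \<tau> \<sigma> :: real and z :: "nat \<Rightarrow> nat" and C1 C2 :: "nat set"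
  assumes "n \<ge> 4" and "d \<ge> 1" and "\<tau> > 0" and "\<sigma> > 0"
    and "\<forall>i\<in>{1..n}. z i \<in> {1, 2}"
    and "{i\<in>{1..n}. z i = 1} \<noteq> {}" and "{i\<in>{1..n}. z i = 2} \<noteq> {}"
    and "C1 \<union> C2 = {1..n}" and "C1 \<inter> C2 = {}" and "C1 \<noteq> {}" and "C2 \<noteq> {}"
    and "\<not> (C1 = {i\<in>{1..n}. z i = 1} \<and> C2 = {i\<in>{1..n}. z i = 2})"
    and "\<not> (C1 = {i\<in>{1..n}. z i = 2} \<and> C2 = {i\<in>{1..n}. z i = 1})"
  shows "let R = real (min (card {i\<in>{1..n}. z i = 1}) (card {i\<in>{1..n}. z i = 2})) / real n;
             \<rho> = 1 - (4 * \<tau>^2 * R^2 / real n / (3 * \<tau>^2 + \<sigma>^2))^2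
         in \<rho> < 1 \<and>
            measure (gmm_measure n d \<tau> \<sigma>)
              {\<omega> \<in> space (gmm_measure n d \<tau> \<sigma>). hartigan_fixed_point d (obs z \<omega>) C1 C2}
            \<le> \<rho> powr (real d / 4)"
proof -
  define minsize where "minsize = min (card {i\<in>{1..n}. z i = 1}) (card {i\<in>{1..n}. z i = 2})"
  define r where "r = 4 * (real minsize)\<^sup>2 / real n ^ 3"
  obtain C C' i where CC': "C = C1 \<and> C' = C2 \<or> C = C2 \<and> C' = C1" and i: "i \<in> C" "2 \<le> card C"
    and gap: "r \<le> hartigan_gap (card C) (card {m\<in>C. z m \<noteq> z i}) (card C') (card {m\<in>C'. z m \<noteq> z i})"
    using incorrect_partition_has_large_hartigan_gap[OF assms(1,5-13)] unfolding r_def minsize_def by blast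
  have "0 < r"
    using assms(1,6,7) by (simp add: r_def minsize_def card_gt_0_iff)
  have "measure (gmm_measure n d \<tau> \<sigma>)
          {\<omega> \<in> space (gmm_measure n d \<tau> \<sigma>). hartigan_fixed_point d (obs z \<omega>) C1 C2}
        \<le> (1 - (\<tau>\<^sup>2 * r / (3 * \<tau>\<^sup>2 + \<sigma>\<^sup>2))\<^sup>2) powr (real d / 4)"
    using CC' i assms(8-11)
    by (intro measure_no_improving_move_le[OF assms(3,4) _ assms(5) _ i _ _ _ \<open>0 < r\<close> gap])
      (auto simp: hartigan_fixed_point_def)
  moreover have "4 * \<tau>\<^sup>2 * (real minsize / real n)\<^sup>2 / real n = \<tau>\<^sup>2 * r"
    using assms(1) by (simp add: r_def power_divide power2_eq_square power3_eq_cube)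
  moreover have "0 < (\<tau>\<^sup>2 * r / (3 * \<tau>\<^sup>2 + \<sigma>\<^sup>2))\<^sup>2"
    using \<open>0 < r\<close> assms(3,4) by (intro zero_less_power divide_pos_pos mult_pos_pos add_pos_pos) auto
  ultimately show ?thesis
    unfolding Let_def minsize_def[symmetric] by simp
qed

end
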